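(* Let $F,G$ be $C^2$ functions of one variable and let $X(r,s)=(x,y,z)$ be a graphical (regular) surface of the form $(\psi(y,z),y,z)$ given by the Barbishov-Chernikov representation $x=\int rF'(r)\,dr+\int sG'(s)\,ds$, $y-z=F(r)-\int s^2G'(s)\,ds$, $y+z=G(s)-\int r^2F'(r)\,dr$. Then $X(r,s)=\frac{\psi(r)+\phi(s)}{2}$, where $$\psi(r)=\Big(2\int rF'(r)\,dr,\ F(r)-\int r^2F'(r)\,dr,\ -F(r)-\int r^2F'(r)\,dr\Big),$$ $$\phi(s)=\Big(2\int sG'(s)\,ds,\ G(s)-\int s^2G'(s)\,ds,\ G(s)+\int s^2G'(s)\,ds\Big),$$ $\psi$ and $\phi$ are lightlike curves in $\mathbb{L}^3$, and $\psi'(r)$, $\phi'(s)$ are linearly independent for all values of $r$ and $s$. Consequently these surfaces are timelike minimal.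
   Context: $\mathbb{L}^3$ denotes $\mathbb{R}^3$ with the metric $ds^2=dx^2+dy^2-dz^2$. A curve is lightlike if its velocity $v$ satisfies $\langle v,v\rangle=0$. A surface is timelike if its induced metric is Lorentzian, and minimal if its mean curvature vanishes. Integrals denote fixed antiderivatives (the same ones in the representation of $X$ and in $\psi,\phi$). *)

theory Defs
  imports "HOL-Analysis.Analysis"
begin

text \<open>Lorentz-Minkowski space L^3: metric dx^2 + dy^2 - dz^2 on real^3.\<close>
definition lip :: "real^3 \<Rightarrow> real^3 \<Rightarrow> real" where
  "lip u v = u$1 * v$1 + u$2 * v$2 - u$3 * v$3"

definition lightlike :: "real^3 \<Rightarrow> bool" where
  "lightlike v \<longleftrightarrow> lip v v = 0"

text \<open>Lorentzian cross product (orthogonal w.r.t. lip to both arguments).\<close>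
definition lcross :: "real^3 \<Rightarrow> real^3 \<Rightarrow> real^3" where
  "lcross u v = vector [u$2* v$3 - u$3* v$2, u$3* v$1 - u$1* v$3, -(u$1* v$2 - u$2* v$1)]"

definition lin_indep2 :: "real^3 \<Rightarrow> real^3 \<Rightarrow> bool" where
  "lin_indep2 u v \<longleftrightarrow> (\<forall>a b. a *\<^sub>R u + b *\<^sub>R v = 0 \<longrightarrow> a = 0 \<and> b = 0)"

definition Xr :: "(real \<Rightarrow> real \<Rightarrow> real^3) \<Rightarrow> real \<Rightarrow> real \<Rightarrow> real^3" where
  "Xr X r s = vector_derivative (\<lambda>t. X t s) (at r)"
definition Xs :: "(real \<Rightarrow> real \<Rightarrow> real^3) \<Rightarrow> real \<Rightarrow> real \<Rightarrow> real^3" where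
  "Xs X r s = vector_derivative (\<lambda>t. X r t) (at s)"
definition Xrr :: "(real \<Rightarrow> real \<Rightarrow> real^3) \<Rightarrow> real \<Rightarrow> real \<Rightarrow> real^3" where
  "Xrr X r s = vector_derivative (\<lambda>t. Xr X t s) (at r)"
definition Xrs :: "(real \<Rightarrow> real \<Rightarrow> real^3) \<Rightarrow> real \<Rightarrow> real \<Rightarrow> real^3" where
  "Xrs X r s = vector_derivative (\<lambda>t. Xr X r t) (at s)"
definition Xss :: "(real \<Rightarrow> real \<Rightarrow> real^3) \<Rightarrow> real \<Rightarrow> real \<Rightarrow> real^3" where
  "Xss X r s = vector_derivative (\<lambda>t. Xs X r t) (at s)"

definition fE where "fE X r s = lip (Xr X r s) (Xr X r s)"
definition fF where "fF X r s = lip (Xr X r s) (Xs X r s)"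
definition fG where "fG X r s = lip (Xs X r s) (Xs X r s)"

definition timelike_at where
  "timelike_at X r s \<longleftrightarrow> fE X r s * fG X r s - (fF X r s)^2 < 0"

definition unormal where
  "unormal X r s = (let N = lcross (Xr X r s) (Xs X r s) in (1 / sqrt \<bar>lip N N\<bar>) *\<^sub>R N)"
definition sL where "sL X r s = lip (Xrr X r s) (unormal X r s)"
definition sM where "sM X r s = lip (Xrs X r s) (unormal X r s)"
definition sN where "sN X r s = lip (Xss X r s) (unormal X r s)"

definition mean_curv where
  "mean_curv X r s = lip (unormal X r s) (unormal X r s) *
     (fE X r s * sN X r s - 2 * fF X r s * sM X r s + fG X r s * sL X r s)
     / (2 * (fE X r s * fG X r s - (fF X r s)^2))"

definition timelike_minimal_on where
  "timelike_minimal_on X U \<longleftrightarrow> (\<forall>(r,s)\<in>U. timelike_at X r s \<and> mean_curv X r s = 0)"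

end

theory Submission
  imports Defs
begin

text \<open>With respect to the Barbishov-Chernikov parameters, \<open>X\<close> splits as the translation surface
  \<open>X r s = (\<psi> r + \<phi> s) / 2\<close>, so \<open>X\<^sub>r = \<psi>'/2\<close>, \<open>X\<^sub>s = \<phi>'/2\<close> and \<open>X\<^sub>r\<^sub>s = 0\<close>. Both \<open>\<psi>' = F'(r) (2r, 1 - r\<^sup>2, -1 - r\<^sup>2)\<close>
  and \<open>\<phi>' = G'(s) (2s, 1 - s\<^sup>2, 1 + s\<^sup>2)\<close> are lightlike, so the coordinate lines are null and the
  induced metric is \<open>2 \<langle>X\<^sub>r, X\<^sub>s\<rangle> dr ds\<close>. Two independent lightlike vectors of \<open>\<bbbL>\<^sup>3\<close> are never
  orthogonal, so regularity forces \<open>\<langle>X\<^sub>r, X\<^sub>s\<rangle> \<noteq> 0\<close>: the metric is Lorentzian, and since \<open>X\<^sub>r\<^sub>s = 0\<close> the mean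
  curvature \<open>(E N - 2 F M + G L) / \<dots>\<close> vanishes.\<close>

lemma vector3_eq_axis_sum:
  "(vector [a, b, c] :: real^3) = a *\<^sub>R axis 1 1 + b *\<^sub>R axis 2 1 + c *\<^sub>R axis 3 1"
  by (simp add: vec_eq_iff forall_3 axis_def)

lemma has_vector_derivative_vector3:
  assumes "(f has_real_derivative f') (at x)" "(g has_real_derivative g') (at x)"
    and "(h has_real_derivative h') (at x)"
  shows "((\<lambda>t. vector [f t, g t, h t] :: real^3) has_vector_derivative vector [f', g', h']) (at x)"
proof -
  have "((\<lambda>t. f t *\<^sub>R axis 1 1 + g t *\<^sub>R axis 2 1 + h t *\<^sub>R axis 3 1 :: real^3)
      has_vector_derivative f' *\<^sub>R axis 1 1 + g' *\<^sub>R axis 2 1 + h' *\<^sub>R axis 3 1) (at x)"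
    using assms by (intro derivative_eq_intros) (auto simp: has_real_derivative_iff_has_vector_derivative)
  then show ?thesis by (simp add: vector3_eq_axis_sum)
qed

lemma has_vector_derivative_scaleR_right:
  "(f has_vector_derivative f') F \<Longrightarrow> ((\<lambda>x. c *\<^sub>R f x) has_vector_derivative c *\<^sub>R f') F"
  by (rule bounded_linear.has_vector_derivative[OF bounded_linear_scaleR_right])

lemma lip_scaleR: "lip (a *\<^sub>R u) (b *\<^sub>R v) = a * b * lip u v"
  by (simp add: lip_def algebra_simps)

lemma lightlike_scaleR: "lightlike v \<Longrightarrow> lightlike (c *\<^sub>R v)"
  by (simp add: lightlike_def lip_scaleR)

lemma lin_indep2_scaleR_imp: "lin_indep2 (c *\<^sub>R u) (d *\<^sub>R v) \<Longrightarrow> lin_indep2 u v"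
  unfolding lin_indep2_def
proof (intro allI impI)
  fix a b :: real
  assume indep: "\<forall>a b. a *\<^sub>R c *\<^sub>R u + b *\<^sub>R d *\<^sub>R v = 0 \<longrightarrow> a = 0 \<and> b = 0"
    and comb: "a *\<^sub>R u + b *\<^sub>R v = 0"
  have "c \<noteq> 0" "d \<noteq> 0"
    using indep[rule_format, of 1 0] indep[rule_format, of 0 1] by auto
  then have "(a / c) *\<^sub>R c *\<^sub>R u + (b / d) *\<^sub>R d *\<^sub>R v = 0"
    using comb by simp
  then show "a = 0 \<and> b = 0"
    using indep \<open>c \<noteq> 0\<close> \<open>d \<noteq> 0\<close> by fastforce
qed

text \<open>If \<open>u, v\<close> are lightlike and orthogonal, the horizontal parts of \<open>v$3 u - u$3 v\<close> have squared
  length \<open>2 (u$3 v$3)\<^sup>2 - 2 (u$3 v$3) (u$1 v$1 + u$2 v$2) = 0\<close>; so this combination vanishes, and it is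
  nontrivial unless \<open>u$3 = v$3 = 0\<close>, in which case \<open>u = 0\<close>.\<close>

lemma lightlike_lin_indep2_imp_lip_nonzero:
  assumes "lightlike u" "lightlike v" "lin_indep2 u v"
  shows "lip u v \<noteq> 0"
proof
  assume orth: "lip u v = 0"
  have null: "(u$1)\<^sup>2 + (u$2)\<^sup>2 = (u$3)\<^sup>2" "(v$1)\<^sup>2 + (v$2)\<^sup>2 = (v$3)\<^sup>2"
    using assms(1,2) by (simp_all add: lightlike_def lip_def power2_eq_square)
  have "(v$3 * u$1 - u$3 * v$1)\<^sup>2 + (v$3 * u$2 - u$3 * v$2)\<^sup>2
      = (v$3)\<^sup>2 * ((u$1)\<^sup>2 + (u$2)\<^sup>2) + (u$3)\<^sup>2 * ((v$1)\<^sup>2 + (v$2)\<^sup>2) - 2 * u$3 * v$3 * (u$1 * v$1 + u$2 * v$2)"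
    by (simp add: power2_eq_square algebra_simps)
  also have "\<dots> = 0"
    using null orth by (simp add: lip_def power2_eq_square algebra_simps)
  finally have comb: "v$3 *\<^sub>R u + (- u$3) *\<^sub>R v = 0"
    by (simp add: vec_eq_iff forall_3 sum_power2_eq_zero_iff)
  show False
  proof (cases "u$3 = 0 \<and> v$3 = 0")
    case True
    then have "1 *\<^sub>R u + 0 *\<^sub>R v = 0"
      using null by (simp add: vec_eq_iff forall_3 sum_power2_eq_zero_iff)
    then show False
      using assms(3) unfolding lin_indep2_def by fastforce
  next
    case False
    then show False
      using comb assms(3) unfolding lin_indep2_def by fastforce
  qed
qed

lemma Xr_translation_surface:
  assumes "open I" "r \<in> I" "s \<in> J"
    and "\<And>r s. r \<in> I \<Longrightarrow> s \<in> J \<Longrightarrow> X r s = f r + g s"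
    and "(f has_vector_derivative f') (at r)"
  shows "Xr X r s = f'"
proof -
  have "((\<lambda>t. f t + g s) has_vector_derivative f') (at r)"
    using assms(5) by (auto intro!: derivative_eq_intros)
  then have "((\<lambda>t. X t s) has_vector_derivative f') (at r)"
    by (rule has_vector_derivative_transform_within_open[OF _ assms(1,2)]) (simp add: assms(3,4))
  then show ?thesis
    unfolding Xr_def by (rule vector_derivative_at)
qed

lemma Xs_translation_surface:
  assumes "open J" "r \<in> I" "s \<in> J"
    and "\<And>r s. r \<in> I \<Longrightarrow> s \<in> J \<Longrightarrow> X r s = f r + g s"
    and "(g has_vector_derivative g') (at s)"
  shows "Xs X r s = g'"
proof -
  have "((\<lambda>t. f r + g t) has_vector_derivative g') (at s)"
    using assms(5) by (auto intro!: derivative_eq_intros)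
  then have "((\<lambda>t. X r t) has_vector_derivative g') (at s)"
    by (rule has_vector_derivative_transform_within_open[OF _ assms(1,3)]) (simp add: assms(2,4))
  then show ?thesis
    unfolding Xs_def by (rule vector_derivative_at)
qed

lemma Xrs_translation_surface:
  assumes "open I" "open J" "r \<in> I" "s \<in> J"
    and "\<And>r s. r \<in> I \<Longrightarrow> s \<in> J \<Longrightarrow> X r s = f r + g s"
    and "(f has_vector_derivative f') (at r)"
  shows "Xrs X r s = 0"
proof -
  have "((\<lambda>t. f') has_vector_derivative 0) (at s)"
    by (rule has_vector_derivative_const)
  then have "((\<lambda>t. Xr X r t) has_vector_derivative 0) (at s)"
    by (rule has_vector_derivative_transform_within_open[OF _ assms(2,4)])
      (simp add: Xr_translation_surface[OF assms(1,3) _ assms(5,6)])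
  then show ?thesis
    unfolding Xrs_def by (rule vector_derivative_at)
qed

lemma timelike_minimal_at_null_coordinates:
  assumes "lightlike (Xr X r s)" "lightlike (Xs X r s)" "lin_indep2 (Xr X r s) (Xs X r s)"
    and "Xrs X r s = 0"
  shows "timelike_at X r s \<and> mean_curv X r s = 0"
proof -
  have "fE X r s = 0" "fG X r s = 0"
    using assms(1,2) by (simp_all add: fE_def fG_def lightlike_def)
  moreover have "fF X r s \<noteq> 0"
    using lightlike_lin_indep2_imp_lip_nonzero[OF assms(1-3)] by (simp add: fF_def)
  moreover have "sM X r s = 0"
    using assms(4) by (simp add: sM_def lip_def)
  ultimately show ?thesis
    by (simp add: timelike_at_def mean_curv_def)
qed

lemma timelike_minimal_on_null_translation_surface:
  assumes I: "open I" and J: "open J"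
    and X: "\<And>r s. r \<in> I \<Longrightarrow> s \<in> J \<Longrightarrow> X r s = f r + g s"
    and f: "\<And>r. r \<in> I \<Longrightarrow> (f has_vector_derivative f' r) (at r) \<and> lightlike (f' r)"
    and g: "\<And>s. s \<in> J \<Longrightarrow> (g has_vector_derivative g' s) (at s) \<and> lightlike (g' s)"
    and regular: "\<And>r s. r \<in> I \<Longrightarrow> s \<in> J \<Longrightarrow> lin_indep2 (Xr X r s) (Xs X r s)"
  shows "timelike_minimal_on X (I \<times> J)"
  unfolding timelike_minimal_on_def
proof clarify
  fix r s assume rs: "r \<in> I" "s \<in> J"
  have "Xr X r s = f' r" "Xs X r s = g' s" "Xrs X r s = 0"
    using Xr_translation_surface[OF I rs X] Xs_translation_surface[OF J rs X]
      Xrs_translation_surface[OF I J rs X] f[OF rs(1)] g[OF rs(2)] by auto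
  then show "timelike_at X r s \<and> mean_curv X r s = 0"
    using regular[OF rs] f[OF rs(1)] g[OF rs(2)] by (simp add: timelike_minimal_at_null_coordinates)
qed

theorem theorem5p3:
  fixes F F1 F2 G G1 G2 A1 A2 B1 B2 :: "real \<Rightarrow> real"
    and I J :: "real set"
    and X :: "real \<Rightarrow> real \<Rightarrow> real^3"
    and \<psi> \<phi> :: "real \<Rightarrow> real^3"
  assumes I: "open I" and J: "open J"
    and F1: "\<And>r. r \<in> I \<Longrightarrow> (F has_real_derivative F1 r) (at r)"
    and F2: "\<And>r. r \<in> I \<Longrightarrow> (F1 has_real_derivative F2 r) (at r)"
    and F2c: "continuous_on I F2"
    and G1: "\<And>s. s \<in> J \<Longrightarrow> (G has_real_derivative G1 s) (at s)"
    and G2: "\<And>s. s \<in> J \<Longrightarrow> (G1 has_real_derivative G2 s) (at s)"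
    and G2c: "continuous_on J G2"
    and A1: "\<And>r. r \<in> I \<Longrightarrow> (A1 has_real_derivative r * F1 r) (at r)"
    and A2: "\<And>r. r \<in> I \<Longrightarrow> (A2 has_real_derivative r^2 * F1 r) (at r)"
    and B1: "\<And>s. s \<in> J \<Longrightarrow> (B1 has_real_derivative s * G1 s) (at s)"
    and B2: "\<And>s. s \<in> J \<Longrightarrow> (B2 has_real_derivative s^2 * G1 s) (at s)"
    and X: "\<And>r s. r \<in> I \<Longrightarrow> s \<in> J \<Longrightarrow>
              X r s $ 1 = A1 r + B1 s \<and>
              X r s $ 2 - X r s $ 3 = F r - B2 s \<and>
              X r s $ 2 + X r s $ 3 = G s - A2 r"
    and graphical: "inj_on (\<lambda>(r,s). (X r s $ 2, X r s $ 3)) (I \<times> J)"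
    and regular: "\<And>r s. r \<in> I \<Longrightarrow> s \<in> J \<Longrightarrow> lin_indep2 (Xr X r s) (Xs X r s)"
    and \<psi>: "\<psi> = (\<lambda>r. vector [2 * A1 r, F r - A2 r, - F r - A2 r])"
    and \<phi>: "\<phi> = (\<lambda>s. vector [2 * B1 s, G s - B2 s, G s + B2 s])"
  shows "(\<forall>r\<in>I. \<forall>s\<in>J. X r s = (1/2) *\<^sub>R (\<psi> r + \<phi> s))
    \<and> (\<forall>r\<in>I. \<psi> differentiable (at r) \<and> lightlike (vector_derivative \<psi> (at r)))
    \<and> (\<forall>s\<in>J. \<phi> differentiable (at s) \<and> lightlike (vector_derivative \<phi> (at s)))
    \<and> (\<forall>r\<in>I. \<forall>s\<in>J. lin_indep2 (vector_derivative \<psi> (at r)) (vector_derivative \<phi> (at s)))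
    \<and> timelike_minimal_on X (I \<times> J)"
proof -
  define \<psi>' where "\<psi>' r =
    (vector [2 * (r * F1 r), F1 r - r^2 * F1 r, - F1 r - r^2 * F1 r] :: real^3)" for r
  define \<phi>' where "\<phi>' s =
    (vector [2 * (s * G1 s), G1 s - s^2 * G1 s, G1 s + s^2 * G1 s] :: real^3)" for s
  have translation: "X r s = (1/2) *\<^sub>R \<psi> r + (1/2) *\<^sub>R \<phi> s" if "r \<in> I" "s \<in> J" for r s
    using X[OF that] unfolding \<psi> \<phi> by (simp add: vec_eq_iff forall_3 field_simps)
  have d\<psi>: "(\<psi> has_vector_derivative \<psi>' r) (at r)" if "r \<in> I" for r
    unfolding \<psi> \<psi>'_def
    by (rule has_vector_derivative_vector3) (auto intro!: derivative_eq_intros A1 A2 F1 that)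
  have d\<phi>: "(\<phi> has_vector_derivative \<phi>' s) (at s)" if "s \<in> J" for s
    unfolding \<phi> \<phi>'_def
    by (rule has_vector_derivative_vector3) (auto intro!: derivative_eq_intros B1 B2 G1 that)
  have null: "lightlike (\<psi>' r)" "lightlike (\<phi>' s)" for r s
    by (simp_all add: \<psi>'_def \<phi>'_def lightlike_def lip_def algebra_simps power2_eq_square)
  have "Xr X r s = (1/2) *\<^sub>R \<psi>' r" "Xs X r s = (1/2) *\<^sub>R \<phi>' s" if "r \<in> I" "s \<in> J" for r s
    using Xr_translation_surface[OF I that translation has_vector_derivative_scaleR_right[OF d\<psi>]]
      Xs_translation_surface[OF J that translation has_vector_derivative_scaleR_right[OF d\<phi>]] that
    by auto
  then have indep: "lin_indep2 (\<psi>' r) (\<phi>' s)" if "r \<in> I" "s \<in> J" for r s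
    using regular[OF that] that by (metis lin_indep2_scaleR_imp)
  have "timelike_minimal_on X (I \<times> J)"
    using has_vector_derivative_scaleR_right[OF d\<psi>] has_vector_derivative_scaleR_right[OF d\<phi>]
      null[THEN lightlike_scaleR]
    by (intro timelike_minimal_on_null_translation_surface[OF I J translation _ _ regular]) auto
  moreover have "vector_derivative \<psi> (at r) = \<psi>' r" if "r \<in> I" for r
    using d\<psi>[OF that] by (rule vector_derivative_at)
  moreover have "vector_derivative \<phi> (at s) = \<phi>' s" if "s \<in> J" for s
    using d\<phi>[OF that] by (rule vector_derivative_at)
  ultimately show ?thesis
    using translation null indep differentiableI_vector[OF d\<psi>] differentiableI_vector[OF d\<phi>]
    by (simp add: scaleR_right_distrib)
qed

end
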